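(* Let $k\ge\ell\ge 2$ be integers with $k+\ell\ge6$, let $G$ be a finite digraph, let $Z\subseteq V(G)$ with $|Z|\ge2$, and let $v\in V(G)\setminus Z$. Then $$\Pr[\phi\in\mathcal S \text{ and } \phi(I\cup O)\subseteq Z\mid \phi(c)=v]\le(1-\delta(Z))\,(\mu(Z)-\rho^-_Z(v))^k(\rho^-_Z(v))^\ell\le(1-\delta(Z))\,\lambda_0\,\mu(Z)^m.$$
   Context: Put $m=k+\ell$ and $\lambda_0=k^k\ell^\ell/m^m$. Digraphs are finite, without loops; $xy$ denotes an arc from $x$ to $y$; two vertices are adjacent if at least one of $xy,yx$ is an arc. The oriented star $S_{k,\ell}$ has a center $c$, a set $O$ of $k$ out-leaves and a set $I$ of $\ell$ in-leaves; its arcs are exactly $co$ ($o\in O$) and $ic$ ($i\in I$). For a digraph $G$ on $n$ vertices, let $\phi$ be a uniformly random map from $V(S_{k,\ell})$ to $V(G)$ (all $n^{m+1}$ maps equally likely), and let $\mathcal S$ be the set of maps $\phi$ that are isomorphisms from $S_{k,\ell}$ onto the induced subdigraph $G[\mathrm{Im}\,\phi]$ (in particular injective). For $A\subseteq V(G)$: $\mu(A)=|A|/n$; $N^-_A(x)$ is the set of in-neighbours of $x$ lying in $A$, and $\rho^-_A(x)=|N^-_A(x)|/n$. For $Z\subseteq V(G)$ with $|Z|\ge2$, $\delta(Z)$ is the number of adjacent unordered pairs of vertices of $Z$ divided by $\binom{|Z|}{2}$. *)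

theory Defs
  imports "HOL-Library.FuncSet" Complex_Main
begin

definition digraph :: "'a set \<Rightarrow> ('a \<times> 'a) set \<Rightarrow> bool" where
  "digraph V E \<longleftrightarrow> finite V \<and> E \<subseteq> V \<times> V \<and> (\<forall>x. (x, x) \<notin> E)"

datatype svert = Ctr | OutL nat | InL nat

definition star_verts :: "nat \<Rightarrow> nat \<Rightarrow> svert set" where
  "star_verts k l = {Ctr} \<union> OutL ` {..<k} \<union> InL ` {..<l}"

definition star_leaves :: "nat \<Rightarrow> nat \<Rightarrow> svert set" where
  "star_leaves k l = OutL ` {..<k} \<union> InL ` {..<l}"

definition star_arc :: "nat \<Rightarrow> nat \<Rightarrow> svert \<Rightarrow> svert \<Rightarrow> bool" where
  "star_arc k l x y \<longleftrightarrow>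
     (x = Ctr \<and> (\<exists>i<k. y = OutL i)) \<or> ((\<exists>i<l. x = InL i) \<and> y = Ctr)"

text \<open>phi is an isomorphism from S_{k,l} onto the induced subdigraph G[Im phi].\<close>
definition star_iso :: "nat \<Rightarrow> nat \<Rightarrow> ('a \<times> 'a) set \<Rightarrow> (svert \<Rightarrow> 'a) \<Rightarrow> bool" where
  "star_iso k l E phi \<longleftrightarrow> inj_on phi (star_verts k l) \<and>
     (\<forall>x\<in>star_verts k l. \<forall>y\<in>star_verts k l. (phi x, phi y) \<in> E \<longleftrightarrow> star_arc k l x y)"

text \<open>Pr[phi in S and phi(I \<union> O) \<subseteq> Z | phi(c) = v], phi uniform over all maps V(S) \<rightarrow> V.\<close>
definition cond_prob :: "nat \<Rightarrow> nat \<Rightarrow> 'a set \<Rightarrow> ('a \<times> 'a) set \<Rightarrow> 'a set \<Rightarrow> 'a \<Rightarrow> real" where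
  "cond_prob k l V E Z v =
     real (card {phi \<in> star_verts k l \<rightarrow>\<^sub>E V. phi Ctr = v \<and> star_iso k l E phi \<and> phi ` star_leaves k l \<subseteq> Z})
     / real (card {phi \<in> star_verts k l \<rightarrow>\<^sub>E V. phi Ctr = v})"

definition mu :: "'a set \<Rightarrow> 'a set \<Rightarrow> real" where
  "mu V A = real (card A) / real (card V)"

definition rho_in :: "'a set \<Rightarrow> ('a \<times> 'a) set \<Rightarrow> 'a set \<Rightarrow> 'a \<Rightarrow> real" where
  "rho_in V E A x = real (card {u \<in> A. (u, x) \<in> E}) / real (card V)"

definition density :: "('a \<times> 'a) set \<Rightarrow> 'a set \<Rightarrow> real" where
  "density E Z = real (card {{x, y} | x y. x \<in> Z \<and> y \<in> Z \<and> x \<noteq> y \<and> ((x, y) \<in> E \<or> (y, x) \<in> E)})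
     / real (card Z choose 2)"

definition lambda0 :: "nat \<Rightarrow> nat \<Rightarrow> real" where
  "lambda0 k l = real k ^ k * real l ^ l / real (k + l) ^ (k + l)"

end

(*
  Write N for the in-neighbours of v in Z. A copy of the star centred at v with all leaves in Z
  sends every out-leaf into Z - N (it must not be an in-neighbour of v) and every in-leaf into N,
  and sends any two leaves to a non-adjacent ordered pair of distinct vertices of Z. Fixing the
  images of two leaves and letting the remaining leaves range freely shows, for each of the four
  choices X, Y in {Z - N, N}, that (number of copies) * |X| * |Y| is at most the number of
  non-adjacent pairs in X * Y times |Z - N|^k * |N|^l. Summing the four bounds gives
  (number of copies) * |Z|^2 <= (number of non-adjacent ordered pairs) * |Z - N|^k * |N|^l, and the
  non-adjacent ordered pairs number (1 - density) |Z| (|Z| - 1). The second inequality is the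
  weighted AM-GM inequality.
*)
theory Submission
  imports Defs "HOL-Analysis.Convex"
begin

lemma card_PiE_pair_in_le:
  assumes "finite L" "\<And>i. i \<in> L \<Longrightarrow> finite (B i)"
    and "x \<in> L" "y \<in> L" "x \<noteq> y" "R \<subseteq> B x \<times> B y"
  shows "card {f \<in> Pi\<^sub>E L B. (f x, f y) \<in> R} * (card (B x) * card (B y))
           \<le> card R * (\<Prod>i\<in>L. card (B i))"
proof -
  let ?S = "{f \<in> Pi\<^sub>E L B. (f x, f y) \<in> R}"
  let ?M = "L - {x, y}"
  have inj: "inj_on (\<lambda>f. ((f x, f y), restrict f ?M)) ?S"
  proof (rule inj_onI)
    fix f g assume "f \<in> ?S" "g \<in> ?S" and eq: "((f x, f y), restrict f ?M) = ((g x, g y), restrict g ?M)"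
    then show "f = g"
      by (intro PiE_ext[of f L B g]) (auto dest: fun_cong[where x = i for i] split: if_splits)
  qed
  have "(\<lambda>f. ((f x, f y), restrict f ?M)) ` ?S \<subseteq> R \<times> Pi\<^sub>E ?M B"
    by (auto simp: Pi_iff dest: PiE_mem split: if_splits)
  then have "card ?S \<le> card (R \<times> Pi\<^sub>E ?M B)"
    using assms by (intro card_inj_on_le[OF inj]) (auto intro!: finite_cartesian_product finite_PiE
        intro: finite_subset[of R "B x \<times> B y"])
  also have "\<dots> = card R * (\<Prod>i\<in>?M. card (B i))"
    using assms(1) by (simp add: card_cartesian_product card_PiE)
  finally have "card ?S * (card (B x) * card (B y))
      \<le> card R * ((\<Prod>i\<in>?M. card (B i)) * (card (B x) * card (B y)))"
    by (simp add: mult.assoc)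
  also have "(\<Prod>i\<in>?M. card (B i)) * (card (B x) * card (B y)) = (\<Prod>i\<in>L. card (B i))"
    using assms(1,3-5)
    by (simp add: prod.remove[of L x] prod.remove[of "L - {x}" y] Diff_insert2[symmetric] mult_ac)
  finally show ?thesis .
qed

lemma prod_star_verts:
  "(\<Prod>s\<in>star_verts k l. h s) = h Ctr * (\<Prod>i<k. h (OutL i)) * (\<Prod>i<l. h (InL i))"
proof -
  have "Ctr \<notin> OutL ` {..<k} \<union> InL ` {..<l}" "OutL ` {..<k} \<inter> InL ` {..<l} = {}"
    by auto
  then show ?thesis
    unfolding star_verts_def by (simp add: prod.union_disjoint prod.reindex inj_on_def mult.assoc)
qed

lemma card_PiE_fixed_value:
  assumes "finite A" "x \<in> A" "c \<in> V"
  shows "card {f \<in> A \<rightarrow>\<^sub>E V. f x = c} = card V ^ (card A - 1)"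
proof -
  have "{f \<in> A \<rightarrow>\<^sub>E V. f x = c} = Pi\<^sub>E A (\<lambda>i. if i = x then {c} else V)"
    using assms(2,3) by (auto simp: PiE_iff extensional_def split: if_splits)
  then show ?thesis
    using assms(1,2) by (simp add: card_PiE prod.remove[of A x])
qed

lemma card_star_verts: "card (star_verts k l) = k + l + 1"
proof -
  have "Ctr \<notin> OutL ` {..<k} \<union> InL ` {..<l}" "OutL ` {..<k} \<inter> InL ` {..<l} = {}"
    by auto
  then show ?thesis
    unfolding star_verts_def by (simp add: card_Un_disjoint card_image inj_on_def)
qed

definition adjacent_pairs :: "('a \<times> 'a) set \<Rightarrow> 'a set \<Rightarrow> ('a \<times> 'a) set" where
  "adjacent_pairs E Z = {(x, y) \<in> Z \<times> Z. x \<noteq> y \<and> ((x, y) \<in> E \<or> (y, x) \<in> E)}"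

definition nonadjacent_pairs :: "('a \<times> 'a) set \<Rightarrow> 'a set \<Rightarrow> ('a \<times> 'a) set" where
  "nonadjacent_pairs E Z = {(x, y) \<in> Z \<times> Z. x \<noteq> y \<and> (x, y) \<notin> E \<and> (y, x) \<notin> E}"

lemma card_Int_Times_Un:
  assumes "finite X" "finite Y" "X \<inter> Y = {}"
  shows "card (P \<inter> (X \<union> Y) \<times> (X \<union> Y))
           = card (P \<inter> X \<times> X) + card (P \<inter> X \<times> Y) + card (P \<inter> Y \<times> X) + card (P \<inter> Y \<times> Y)"
proof -
  have "P \<inter> (X \<union> Y) \<times> (X \<union> Y) = (P \<inter> X \<times> X) \<union> (P \<inter> X \<times> Y) \<union> (P \<inter> Y \<times> X) \<union> (P \<inter> Y \<times> Y)"
    by blast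
  then show ?thesis
    using assms by (simp add: card_Un_disjoint disjoint_iff)
qed

lemma card_adjacent_pairs:
  assumes "finite Z"
  shows "card (adjacent_pairs E Z)
           = 2 * card {{x, y} | x y. x \<in> Z \<and> y \<in> Z \<and> x \<noteq> y \<and> ((x, y) \<in> E \<or> (y, x) \<in> E)}"
    (is "card ?A = 2 * card ?U")
proof -
  have fin: "finite ?A" "finite ?U"
    using assms by (auto simp: adjacent_pairs_def intro: finite_subset[of _ "Z \<times> Z"] finite_subset[of _ "Pow Z"])
  have "(\<Sum>S\<in>?U. card {p \<in> ?A. {fst p, snd p} = S}) = 1 * card ?A"
  proof (rule sum_multicount[OF fin(2,1)], rule ballI)
    fix p assume "p \<in> ?A"
    then have "{S \<in> ?U. {fst p, snd p} = S} = {{fst p, snd p}}"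
      by (auto simp: adjacent_pairs_def; blast)
    then show "card {S \<in> ?U. {fst p, snd p} = S} = 1"
      by simp
  qed
  moreover have "card {p \<in> ?A. {fst p, snd p} = S} = 2" if "S \<in> ?U" for S
  proof -
    obtain x y where "S = {x, y}" "x \<noteq> y" "x \<in> Z" "y \<in> Z" "(x, y) \<in> E \<or> (y, x) \<in> E"
      using \<open>S \<in> ?U\<close> by blast
    then have "{p \<in> ?A. {fst p, snd p} = S} = {(x, y), (y, x)}"
      by (auto simp: adjacent_pairs_def doubleton_eq_iff)
    then show ?thesis
      using \<open>x \<noteq> y\<close> by simp
  qed
  ultimately show ?thesis
    by simp
qed

lemma card_nonadjacent_pairs:
  assumes "finite Z" "card Z \<ge> 2"
  shows "real (card (nonadjacent_pairs E Z)) = (1 - density E Z) * (real (card Z) * (real (card Z) - 1))"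
proof -
  let ?z = "card Z" and ?U = "{{x, y} | x y. x \<in> Z \<and> y \<in> Z \<and> x \<noteq> y \<and> ((x, y) \<in> E \<or> (y, x) \<in> E)}"
  have fin: "finite (nonadjacent_pairs E Z)" "finite (adjacent_pairs E Z)"
    using assms(1) by (auto simp: nonadjacent_pairs_def adjacent_pairs_def intro: finite_subset[of _ "Z \<times> Z"])
  have "nonadjacent_pairs E Z \<inter> adjacent_pairs E Z = {}"
    by (auto simp: nonadjacent_pairs_def adjacent_pairs_def)
  then have "card (nonadjacent_pairs E Z) + card (adjacent_pairs E Z)
      = card (nonadjacent_pairs E Z \<union> adjacent_pairs E Z)"
    using fin by (simp add: card_Un_disjoint)
  also have "nonadjacent_pairs E Z \<union> adjacent_pairs E Z = Z \<times> Z - (\<lambda>x. (x, x)) ` Z"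
    by (auto simp: nonadjacent_pairs_def adjacent_pairs_def)
  also have "card \<dots> = ?z * (?z - 1)"
    using assms(1)
    by (simp add: card_Diff_subset card_cartesian_product card_image inj_on_def image_subset_iff
        diff_mult_distrib2)
  finally have "real (card (nonadjacent_pairs E Z) + card (adjacent_pairs E Z)) = real (?z * (?z - 1))"
    by (simp only:)
  then have N: "real (card (nonadjacent_pairs E Z)) = real ?z * (real ?z - 1) - 2 * real (card ?U)"
    using assms(2) by (simp add: card_adjacent_pairs[OF assms(1)] of_nat_diff)
  have "2 * (n choose 2) = n * (n - 1)" for n :: nat
    by (induction n) (auto simp: choose_two)
  then have "real (2 * (?z choose 2)) = real (?z * (?z - 1))"
    by presburger
  then have c: "real ?z * (real ?z - 1) = 2 * real (?z choose 2)"
    using assms(2) by (simp add: of_nat_diff)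
  moreover have "real (?z choose 2) > 0"
    using assms(2) by simp
  ultimately show ?thesis
    unfolding density_def N c by (simp add: field_simps)
qed

lemma power_mult_power_le_lambda0:
  fixes X Y :: real
  assumes "X \<ge> 0" "Y \<ge> 0" "k > 0" "l > 0"
  shows "X ^ k * Y ^ l \<le> lambda0 k l * (X + Y) ^ (k + l)"
proof (cases "X = 0 \<or> Y = 0")
  case True
  then have "X ^ k * Y ^ l = 0"
    using assms(3,4) by auto
  moreover have "lambda0 k l * (X + Y) ^ (k + l) \<ge> 0"
    using assms by (simp add: lambda0_def)
  ultimately show ?thesis
    by linarith
next
  case False
  let ?m = "real (k + l)"
  have pow: "(a powr (real j / ?m)) ^ (k + l) = a ^ j" if "a > 0" for a :: real and j
    using that assms(3) by (simp add: powr_power powr_realpow)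
  have "(X / k) ^ k * (Y / l) ^ l = ((X / k) powr (k / ?m) * (Y / l) powr (l / ?m)) ^ (k + l)"
    unfolding power_mult_distrib using pow[of "X / k" k] pow[of "Y / l" l] assms False by simp
  also have "\<dots> \<le> ((k / ?m) * (X / k) + (l / ?m) * (Y / l)) ^ (k + l)"
    using assms False by (intro power_mono Youngs_inequality_0) (auto simp: add_divide_distrib[symmetric])
  also have "(k / ?m) * (X / k) + (l / ?m) * (Y / l) = (X + Y) / ?m"
    using assms by (simp add: add_divide_distrib)
  finally have "(X / k) ^ k * (Y / l) ^ l \<le> ((X + Y) / ?m) ^ (k + l)" .
  then show ?thesis
    using assms by (simp add: lambda0_def power_divide field_simps)
qed

definition in_nbrs :: "('a \<times> 'a) set \<Rightarrow> 'a set \<Rightarrow> 'a \<Rightarrow> 'a set" where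
  "in_nbrs E A x = {u \<in> A. (u, x) \<in> E}"

lemma card_Diff_in_nbrs:
  assumes "finite A"
  shows "card A = card (A - in_nbrs E A x) + card (in_nbrs E A x)"
proof -
  have "A = (A - in_nbrs E A x) \<union> in_nbrs E A x"
    by (auto simp: in_nbrs_def)
  then show ?thesis
    using assms by (metis card_Un_disjoint Diff_disjoint Int_commute finite_Un)
qed

definition star_copies ::
  "nat \<Rightarrow> nat \<Rightarrow> 'a set \<Rightarrow> ('a \<times> 'a) set \<Rightarrow> 'a set \<Rightarrow> 'a \<Rightarrow> (svert \<Rightarrow> 'a) set" where
  "star_copies k l V E Z v =
     {phi \<in> star_verts k l \<rightarrow>\<^sub>E V. phi Ctr = v \<and> star_iso k l E phi \<and> phi ` star_leaves k l \<subseteq> Z}"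

definition leaf_range :: "('a \<times> 'a) set \<Rightarrow> 'a set \<Rightarrow> 'a \<Rightarrow> svert \<Rightarrow> 'a set" where
  "leaf_range E Z v s =
     (case s of Ctr \<Rightarrow> {v} | OutL i \<Rightarrow> Z - in_nbrs E Z v | InL i \<Rightarrow> in_nbrs E Z v)"

lemma star_copies_subset_PiE_leaf_range:
  "star_copies k l V E Z v \<subseteq> Pi\<^sub>E (star_verts k l) (leaf_range E Z v)"
proof
  fix phi assume phi: "phi \<in> star_copies k l V E Z v"
  then have arc: "(phi x, phi y) \<in> E \<longleftrightarrow> star_arc k l x y"
    if "x \<in> star_verts k l" "y \<in> star_verts k l" for x y
    using that by (auto simp: star_copies_def star_iso_def)
  have "phi s \<in> leaf_range E Z v s" if "s \<in> star_verts k l" for s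
  proof (cases s)
    case Ctr
    then show ?thesis using phi by (simp add: star_copies_def leaf_range_def)
  next
    case (OutL i)
    with that have "i < k" "phi s \<in> Z"
      using phi by (auto simp: star_verts_def star_leaves_def star_copies_def)
    moreover have "(phi s, phi Ctr) \<notin> E"
      using arc[of s Ctr] that OutL by (simp add: star_verts_def star_arc_def)
    ultimately show ?thesis
      using phi OutL by (simp add: star_copies_def leaf_range_def in_nbrs_def)
  next
    case (InL i)
    with that have "i < l" "phi s \<in> Z"
      using phi by (auto simp: star_verts_def star_leaves_def star_copies_def)
    moreover have "(phi s, phi Ctr) \<in> E"
      using arc[of s Ctr] that InL \<open>i < l\<close> by (simp add: star_verts_def star_arc_def)
    ultimately show ?thesis
      using phi InL by (simp add: star_copies_def leaf_range_def in_nbrs_def)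
  qed
  then show "phi \<in> Pi\<^sub>E (star_verts k l) (leaf_range E Z v)"
    using phi by (auto simp: star_copies_def PiE_iff)
qed

lemma star_copies_leaves_nonadjacent:
  assumes "phi \<in> star_copies k l V E Z v"
    and "s \<in> star_leaves k l" "t \<in> star_leaves k l" "s \<noteq> t"
  shows "(phi s, phi t) \<in> nonadjacent_pairs E Z"
proof -
  have st: "s \<in> star_verts k l" "t \<in> star_verts k l"
    using assms(2,3) by (auto simp: star_leaves_def star_verts_def)
  have iso: "star_iso k l E phi" and Z: "phi ` star_leaves k l \<subseteq> Z"
    using assms(1) by (simp_all add: star_copies_def)
  have "\<not> star_arc k l s t" "\<not> star_arc k l t s"
    using assms(2,3) by (auto simp: star_arc_def star_leaves_def)
  with iso st have "(phi s, phi t) \<notin> E" "(phi t, phi s) \<notin> E"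
    by (simp_all add: star_iso_def)
  moreover have "phi s \<noteq> phi t"
    using iso st assms(4) by (auto simp: star_iso_def dest: inj_onD)
  ultimately show ?thesis
    using Z assms(2,3) by (auto simp: nonadjacent_pairs_def)
qed

lemma card_star_copies_leaf_pair:
  assumes "finite Z" "s \<in> star_leaves k l" "t \<in> star_leaves k l" "s \<noteq> t"
  shows "card (star_copies k l V E Z v) * (card (leaf_range E Z v s) * card (leaf_range E Z v t))
           \<le> card (nonadjacent_pairs E Z \<inter> leaf_range E Z v s \<times> leaf_range E Z v t)
              * (card (Z - in_nbrs E Z v) ^ k * card (in_nbrs E Z v) ^ l)"
proof -
  let ?B = "leaf_range E Z v"
  let ?R = "nonadjacent_pairs E Z \<inter> ?B s \<times> ?B t"
  have finB: "finite (?B u)" for u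
    using assms(1) by (cases u) (auto simp: leaf_range_def in_nbrs_def)
  have st: "s \<in> star_verts k l" "t \<in> star_verts k l"
    using assms(2,3) by (auto simp: star_leaves_def star_verts_def)
  have "star_copies k l V E Z v \<subseteq> {f \<in> Pi\<^sub>E (star_verts k l) ?B. (f s, f t) \<in> ?R}"
  proof
    fix f assume f: "f \<in> star_copies k l V E Z v"
    then have "f \<in> Pi\<^sub>E (star_verts k l) ?B"
      using star_copies_subset_PiE_leaf_range[of k l V E Z v] by blast
    moreover have "(f s, f t) \<in> nonadjacent_pairs E Z"
      using star_copies_leaves_nonadjacent[OF f assms(2-4)] .
    ultimately show "f \<in> {f \<in> Pi\<^sub>E (star_verts k l) ?B. (f s, f t) \<in> ?R}"
      using st by (auto dest: PiE_mem)
  qed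
  moreover have "finite (Pi\<^sub>E (star_verts k l) ?B)"
    using finB by (simp add: finite_PiE star_verts_def)
  ultimately have "card (star_copies k l V E Z v) \<le> card {f \<in> Pi\<^sub>E (star_verts k l) ?B. (f s, f t) \<in> ?R}"
    by (intro card_mono) auto
  then have "card (star_copies k l V E Z v) * (card (?B s) * card (?B t))
      \<le> card {f \<in> Pi\<^sub>E (star_verts k l) ?B. (f s, f t) \<in> ?R} * (card (?B s) * card (?B t))"
    by (rule mult_le_mono1)
  also have "\<dots> \<le> card ?R * (\<Prod>u\<in>star_verts k l. card (?B u))"
    using finB st assms(4) by (intro card_PiE_pair_in_le) (auto simp: star_verts_def)
  finally show ?thesis
    by (simp add: prod_star_verts leaf_range_def)
qed

lemma card_star_copies:
  assumes "finite Z" "k \<ge> 2" "l \<ge> 2"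
  shows "card (star_copies k l V E Z v) * card Z ^ 2
           \<le> card (nonadjacent_pairs E Z) * (card (Z - in_nbrs E Z v) ^ k * card (in_nbrs E Z v) ^ l)"
proof -
  let ?C = "card (star_copies k l V E Z v)" and ?NA = "nonadjacent_pairs E Z"
  let ?X = "Z - in_nbrs E Z v" and ?Y = "in_nbrs E Z v"
  let ?T = "card ?X ^ k * card ?Y ^ l"
  have leaves: "OutL 0 \<in> star_leaves k l" "OutL 1 \<in> star_leaves k l"
    "InL 0 \<in> star_leaves k l" "InL 1 \<in> star_leaves k l"
    using assms(2,3) by (auto simp: star_leaves_def)
  have XX: "?C * (card ?X * card ?X) \<le> card (?NA \<inter> ?X \<times> ?X) * ?T"
    using card_star_copies_leaf_pair[OF assms(1) leaves(1,2)] by (simp add: leaf_range_def)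
  have XY: "?C * (card ?X * card ?Y) \<le> card (?NA \<inter> ?X \<times> ?Y) * ?T"
    using card_star_copies_leaf_pair[OF assms(1) leaves(1,3)] by (simp add: leaf_range_def)
  have YX: "?C * (card ?Y * card ?X) \<le> card (?NA \<inter> ?Y \<times> ?X) * ?T"
    using card_star_copies_leaf_pair[OF assms(1) leaves(3,1)] by (simp add: leaf_range_def)
  have YY: "?C * (card ?Y * card ?Y) \<le> card (?NA \<inter> ?Y \<times> ?Y) * ?T"
    using card_star_copies_leaf_pair[OF assms(1) leaves(3,4)] by (simp add: leaf_range_def)
  have Z: "Z = ?X \<union> ?Y"
    by (auto simp: in_nbrs_def)
  from card_Diff_in_nbrs[OF assms(1), of E v] have "?C * card Z ^ 2
      = ?C * (card ?X * card ?X) + ?C * (card ?X * card ?Y) + ?C * (card ?Y * card ?X) + ?C * (card ?Y * card ?Y)"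
    by (simp add: power2_eq_square algebra_simps)
  also have "\<dots> \<le> (card (?NA \<inter> ?X \<times> ?X) + card (?NA \<inter> ?X \<times> ?Y) + card (?NA \<inter> ?Y \<times> ?X)
      + card (?NA \<inter> ?Y \<times> ?Y)) * ?T"
    using XX XY YX YY by (simp add: algebra_simps)
  also have "card (?NA \<inter> ?X \<times> ?X) + card (?NA \<inter> ?X \<times> ?Y) + card (?NA \<inter> ?Y \<times> ?X)
      + card (?NA \<inter> ?Y \<times> ?Y) = card (?NA \<inter> Z \<times> Z)"
    using assms(1) by (subst (3 4) Z, intro card_Int_Times_Un[symmetric]) (auto simp: in_nbrs_def)
  also have "?NA \<inter> Z \<times> Z = ?NA"
    by (auto simp: nonadjacent_pairs_def)
  finally show ?thesis .
qed

lemma density_le_one: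
  assumes "finite Z" "card Z \<ge> 2"
  shows "density E Z \<le> 1"
proof -
  have "0 \<le> (1 - density E Z) * (real (card Z) * (real (card Z) - 1))"
    using card_nonadjacent_pairs[OF assms, of E] by (metis of_nat_0_le_iff)
  moreover have "real (card Z) * (real (card Z) - 1) > 0"
    using assms(2) by simp
  ultimately show ?thesis
    by (simp add: zero_le_mult_iff)
qed

lemma card_star_copies_le_density:
  assumes "finite Z" "card Z \<ge> 2" "k \<ge> 2" "l \<ge> 2"
  shows "real (card (star_copies k l V E Z v))
           \<le> (1 - density E Z) * (real (card (Z - in_nbrs E Z v)) ^ k * real (card (in_nbrs E Z v)) ^ l)"
proof -
  let ?C = "real (card (star_copies k l V E Z v))" and ?z = "real (card Z)"
  let ?T = "real (card (Z - in_nbrs E Z v)) ^ k * real (card (in_nbrs E Z v)) ^ l"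
  have "?C * ?z ^ 2 \<le> real (card (nonadjacent_pairs E Z)) * ?T"
    using card_star_copies[OF assms(1,3,4), of V E v] by (simp flip: of_nat_mult of_nat_power)
  also have "\<dots> = (1 - density E Z) * (?z * (?z - 1)) * ?T"
    using card_nonadjacent_pairs[OF assms(1,2)] by simp
  also have "\<dots> \<le> (1 - density E Z) * ?z ^ 2 * ?T"
    using density_le_one[OF assms(1,2), of E]
    by (intro mult_right_mono mult_left_mono) (simp_all add: power2_eq_square algebra_simps)
  finally show ?thesis
    using assms(2) by (simp add: mult.commute mult.left_commute)
qed

theorem lemma4:
  fixes k l :: nat and V :: "'a set" and E :: "('a \<times> 'a) set" and Z :: "'a set" and v :: 'a
  assumes "k \<ge> l" "l \<ge> 2" "k + l \<ge> 6"
    and "digraph V E"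
    and "Z \<subseteq> V" "card Z \<ge> 2"
    and "v \<in> V" "v \<notin> Z"
  shows "cond_prob k l V E Z v
           \<le> (1 - density E Z) * (mu V Z - rho_in V E Z v) ^ k * (rho_in V E Z v) ^ l
         \<and> (1 - density E Z) * (mu V Z - rho_in V E Z v) ^ k * (rho_in V E Z v) ^ l
           \<le> (1 - density E Z) * lambda0 k l * mu V Z ^ (k + l)"
proof -
  have finV: "finite V" and finZ: "finite Z"
    using assms(4,5) by (auto simp: digraph_def intro: finite_subset)
  let ?n = "real (card V)"
  let ?a = "real (card (Z - in_nbrs E Z v))" and ?b = "real (card (in_nbrs E Z v))"
  have n: "?n > 0"
    using finV assms(7) card_gt_0_iff by fastforce
  have "real (card Z) = ?a + ?b"
    using card_Diff_in_nbrs[OF finZ, of E v] by simp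
  then have mu: "mu V Z = ?a / ?n + ?b / ?n"
    by (simp add: mu_def add_divide_distrib)
  have rho: "rho_in V E Z v = ?b / ?n"
    by (simp add: rho_in_def in_nbrs_def)
  have "finite (star_verts k l)" "Ctr \<in> star_verts k l"
    by (simp_all add: star_verts_def)
  then have "card {phi \<in> star_verts k l \<rightarrow>\<^sub>E V. phi Ctr = v} = card V ^ (k + l)"
    using assms(7) by (simp add: card_PiE_fixed_value card_star_verts)
  then have cp: "cond_prob k l V E Z v = real (card (star_copies k l V E Z v)) / ?n ^ (k + l)"
    by (simp add: cond_prob_def star_copies_def)
  have "cond_prob k l V E Z v \<le> (1 - density E Z) * (?a ^ k * ?b ^ l) / ?n ^ (k + l)"
    unfolding cp using assms(1,2,6) finZ n
    by (intro divide_right_mono card_star_copies_le_density) auto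
  also have "\<dots> = (1 - density E Z) * (?a / ?n) ^ k * (?b / ?n) ^ l"
    by (simp add: power_divide power_add)
  finally have first: "cond_prob k l V E Z v \<le> (1 - density E Z) * (?a / ?n) ^ k * (?b / ?n) ^ l" .
  have "(?a / ?n) ^ k * (?b / ?n) ^ l \<le> lambda0 k l * (?a / ?n + ?b / ?n) ^ (k + l)"
    using assms(1,2) by (intro power_mult_power_le_lambda0) auto
  then have second: "(1 - density E Z) * ((?a / ?n) ^ k * (?b / ?n) ^ l)
      \<le> (1 - density E Z) * (lambda0 k l * (?a / ?n + ?b / ?n) ^ (k + l))"
    using density_le_one[OF finZ assms(6), of E] by (intro mult_left_mono) auto
  show ?thesis
    using first second by (simp add: mu rho mult.assoc)
qed

end
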